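(* Let $\bm v_1, \dots, \bm v_N \in \mathbb{R}^{r}$, let $\bm X := \mathsf{Gram}(\bm v_1, \dots, \bm v_N)$, let $\bm V \in \mathbb{R}^{r \times N}$ have columns $\bm v_1,\dots,\bm v_N$, and let $\bm v := \mathrm{vec}(\bm V) \in \mathbb{R}^{rN}$. Then $\bm X \in \mathscr{E}_4^N$ if and only if $\sum_{i=1}^N \|\bm v_i\|_2^2 = N$ and there exists $\bm M \in \mathcal{B}(N, r)$ with $\bm v^\top \bm M \bm v = N^2$. Moreover: (a) if $\bm X \in \mathscr{E}_4^N$ and $\bm Y$ is any degree 4 pseudomoment matrix extending $\bm X$, then there exists $\bm M \in \mathcal{B}(N,r)$ with $\bm v^\top \bm M \bm v = N^2$ and $$Y_{(ij)(k\ell)} = \bm v_i^\top \bm M_{[jk]} \bm v_\ell \quad \text{for all } i,j,k,\ell \in [N].$$ (b) Conversely, if $\sum_{i=1}^N\|\bm v_i\|_2^2 = N$ and $\bm M \in \mathcal{B}(N,r)$ satisfies $\bm v^\top \bm M \bm v = N^2$, then the matrix $\bm Y \in \mathbb{R}^{N^2\times N^2}$ with entries $Y_{(ij)(k\ell)} := \bm v_i^\top \bm M_{[jk]} \bm v_\ell$ is a degree 4 pseudomoment matrix extending $\bm X$.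
   Context: $[N] = \{1,\dots,N\}$. For $\bm v_1,\dots,\bm v_N$, $\mathsf{Gram}(\bm v_1,\dots,\bm v_N)$ is the $N\times N$ matrix with entries $\langle \bm v_i, \bm v_j\rangle$. For $\bm V \in \mathbb{R}^{r\times N}$ with columns $\bm v_i$, $\mathrm{vec}(\bm V) \in \mathbb{R}^{rN}$ is the concatenation $(\bm v_1; \dots; \bm v_N)$. A matrix $\bm M \in \mathbb{R}^{rN\times rN}$ is viewed as an $N\times N$ array of $r\times r$ blocks, $\bm M_{[ij]}$ denoting block $(i,j)$. $\mathcal{B}(N,r)$ is the set of symmetric $\bm M \in \mathbb{R}^{rN\times rN}$ with $\bm M \succeq 0$, $\bm M_{[ii]} = \bm I_r$ for all $i$, and $\bm M_{[ij]} = \bm M_{[ij]}^\top$ for all $i,j$. A degree 4 pseudomoment matrix is a matrix $\bm Y \in \mathbb{R}^{N^2\times N^2}$, rows and columns indexed by pairs $(ij)\in[N]^2$ (lexicographically ordered), such that: (1) $\bm Y\succeq 0$; (2) $Y_{(ij)(kk)}$ does not depend on $k$; (3) $Y_{(ii)(ii)} = 1$ for all $i$; (4) $Y_{(ij)(k\ell)}$ is invariant under all permutations of the four indices $i,j,k,\ell$. Such $\bm Y$ extends $\bm X\in\mathbb{R}^{N\times N}_{\mathrm{sym}}$ if $Y_{(1i)(1j)} = X_{ij}$ for all $i,j$. $\mathscr{E}_4^N$ is the set of symmetric $\bm X \in \mathbb{R}^{N\times N}$ that are extended by some degree 4 pseudomoment matrix. *)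

theory Defs
  imports "HOL-Analysis.Analysis" "HOL-Combinatorics.Permutations"
begin

text \<open>Index sets are [n] = {1..n}. A vector in R^r is a function nat => real
  (only indices in {1..r} matter). Matrices indexed by a finite index set I
  are functions I => I => real.\<close>

definition psd_on :: "'i set \<Rightarrow> ('i \<Rightarrow> 'i \<Rightarrow> real) \<Rightarrow> bool" where
  "psd_on I A \<longleftrightarrow>
     (\<forall>i\<in>I. \<forall>j\<in>I. A i j = A j i) \<and>
     (\<forall>x :: 'i \<Rightarrow> real. 0 \<le> (\<Sum>i\<in>I. \<Sum>j\<in>I. x i * A i j * x j))"

definition gram :: "nat \<Rightarrow> (nat \<Rightarrow> nat \<Rightarrow> real) \<Rightarrow> nat \<Rightarrow> nat \<Rightarrow> real" where
  "gram r v i j = (\<Sum>a\<in>{1..r}. v i a * v j a)"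

definition pseudomoment4 :: "nat \<Rightarrow> (nat \<times> nat \<Rightarrow> nat \<times> nat \<Rightarrow> real) \<Rightarrow> bool" where
  "pseudomoment4 N Y \<longleftrightarrow>
     psd_on ({1..N} \<times> {1..N}) Y \<and>
     (\<forall>i\<in>{1..N}. \<forall>j\<in>{1..N}. \<forall>k\<in>{1..N}. \<forall>k'\<in>{1..N}.
        Y (i,j) (k,k) = Y (i,j) (k',k')) \<and>
     (\<forall>i\<in>{1..N}. Y (i,i) (i,i) = 1) \<and>
     (\<forall>i\<in>{1..N}. \<forall>j\<in>{1..N}. \<forall>k\<in>{1..N}. \<forall>l\<in>{1..N}. \<forall>p. p permutes {..<4::nat} \<longrightarrow>
        (let w = (\<lambda>n. [i,j,k,l] ! n) in
          Y (w (p 0), w (p 1)) (w (p 2), w (p 3)) = Y (i,j) (k,l)))"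

definition extends4 :: "nat \<Rightarrow> (nat \<times> nat \<Rightarrow> nat \<times> nat \<Rightarrow> real) \<Rightarrow> (nat \<Rightarrow> nat \<Rightarrow> real) \<Rightarrow> bool" where
  "extends4 N Y X \<longleftrightarrow> (\<forall>i\<in>{1..N}. \<forall>j\<in>{1..N}. Y (1,i) (1,j) = X i j)"

definition E4 :: "nat \<Rightarrow> (nat \<Rightarrow> nat \<Rightarrow> real) set" where
  "E4 N = {X. (\<forall>i\<in>{1..N}. \<forall>j\<in>{1..N}. X i j = X j i) \<and>
              (\<exists>Y. pseudomoment4 N Y \<and> extends4 N Y X)}"

text \<open>B(N,r): a matrix in R^{rN x rN} viewed as an N x N array of r x r blocks;
  entry M (i,a) (j,b) is entry (a,b) of block M_[ij] (row index (i,a) corresponds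
  to position (i-1)r + a, consistent with vec).\<close>
definition Bset :: "nat \<Rightarrow> nat \<Rightarrow> (nat \<times> nat \<Rightarrow> nat \<times> nat \<Rightarrow> real) set" where
  "Bset N r = {M. psd_on ({1..N} \<times> {1..r}) M \<and>
      (\<forall>i\<in>{1..N}. \<forall>a\<in>{1..r}. \<forall>b\<in>{1..r}. M (i,a) (i,b) = (if a = b then 1 else 0)) \<and>
      (\<forall>i\<in>{1..N}. \<forall>j\<in>{1..N}. \<forall>a\<in>{1..r}. \<forall>b\<in>{1..r}. M (i,a) (j,b) = M (i,b) (j,a))}"

definition quadvec :: "nat \<Rightarrow> nat \<Rightarrow> (nat \<Rightarrow> nat \<Rightarrow> real) \<Rightarrow> (nat \<times> nat \<Rightarrow> nat \<times> nat \<Rightarrow> real) \<Rightarrow> real" where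
  "quadvec N r v M = (\<Sum>p\<in>{1..N} \<times> {1..r}. \<Sum>q\<in>{1..N} \<times> {1..r}.
      v (fst p) (snd p) * M p q * v (fst q) (snd q))"

definition blockform :: "nat \<Rightarrow> (nat \<Rightarrow> nat \<Rightarrow> real) \<Rightarrow> (nat \<times> nat \<Rightarrow> nat \<times> nat \<Rightarrow> real)
    \<Rightarrow> nat \<Rightarrow> nat \<Rightarrow> nat \<Rightarrow> nat \<Rightarrow> real" where
  "blockform r v M i j k l = (\<Sum>a\<in>{1..r}. \<Sum>b\<in>{1..r}. v i a * M (j,a) (k,b) * v l b)"

end

theory Submission
  imports Defs
begin

text \<open>
  Part (b): positive semidefiniteness of M at the vectors e_j \<otimes> v_j - e_k \<otimes> v_k gives
  |v_j|^2 + |v_k|^2 \<ge> v_j^T M_[jk] v_k + v_k^T M_[kj] v_j. Summed over all pairs, the right hand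
  sides add up to 2 v^T M v = 2 N^2 = 2 N \<Sum> |v_j|^2, so every one of these inequalities is tight.
  Hence M_[jk] v_k = v_j and |v_j| = 1 for all j, k, which makes v_i^T M_[jk] v_l invariant under
  all permutations of i, j, k, l; it is psd as the Gram matrix of the vectors e_j \<otimes> v_i.

  Part (a): Y_(ij)(lj) = <v_i, v_l>, so every linear relation among the v_i lies in the kernel of
  Y. Writing the orthogonal projection onto the span of the v_i as P = V L^T, the blocks
  M_[jk] = L^T Y_[jk] L + (I - P) form a psd matrix in B(N, r) with v_i^T M_[jk] v_l = Y_(ij)(kl).
\<close>

section \<open>Positive semidefinite quadratic forms\<close>

definition bilin :: "'i set \<Rightarrow> ('i \<Rightarrow> 'i \<Rightarrow> real) \<Rightarrow> ('i \<Rightarrow> real) \<Rightarrow> ('i \<Rightarrow> real) \<Rightarrow> real" where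
  "bilin S A x y = (\<Sum>i\<in>S. \<Sum>j\<in>S. x i * A i j * y j)"

lemma psd_on_iff_bilin:
  "psd_on S A \<longleftrightarrow> (\<forall>i\<in>S. \<forall>j\<in>S. A i j = A j i) \<and> (\<forall>x. 0 \<le> bilin S A x x)"
  by (simp add: psd_on_def bilin_def)

lemma psd_on_sym: "psd_on S A \<Longrightarrow> i \<in> S \<Longrightarrow> j \<in> S \<Longrightarrow> A i j = A j i"
  by (simp add: psd_on_def)

lemma psd_on_nonneg: "psd_on S A \<Longrightarrow> 0 \<le> bilin S A x x"
  by (simp add: psd_on_iff_bilin)

lemma bilin_diff_diff:
  "bilin S A (\<lambda>i. x i - y i) (\<lambda>i. x i - y i) = bilin S A x x - bilin S A x y - bilin S A y x + bilin S A y y"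
  by (simp add: bilin_def algebra_simps sum.distrib sum_subtractf)

lemma bilin_add_scaled:
  "bilin S A (\<lambda>i. x i + t * d i) (\<lambda>i. x i + t * d i) =
   bilin S A x x + t * bilin S A x d + t * bilin S A d x + t\<^sup>2 * bilin S A d d"
  by (simp add: bilin_def ring_distribs sum.distrib sum_distrib_left power2_eq_square mult_ac)

lemma sum_indicator_mult:
  fixes f :: "'a \<Rightarrow> real"
  assumes "finite S" "p \<in> S"
  shows "(\<Sum>i\<in>S. (if p = i then 1 else 0) * f i) = f p"
    and "(\<Sum>i\<in>S. f i * (if p = i then 1 else 0)) = f p"
proof -
  have "(\<Sum>i\<in>S. (if p = i then 1 else 0) * f i) = (\<Sum>i\<in>S. if p = i then f i else 0)"
    by (intro sum.cong) auto
  with assms show "(\<Sum>i\<in>S. (if p = i then 1 else 0) * f i) = f p" by simp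
  then show "(\<Sum>i\<in>S. f i * (if p = i then 1 else 0)) = f p" by (simp add: mult.commute)
qed

lemma linear_term_vanishes:
  fixes g m :: real
  assumes "\<And>t. 0 \<le> 2 * t * g + t\<^sup>2 * m"
  shows "g = 0"
proof -
  define s where "s = 1 / (\<bar>m\<bar> + 1)"
  have "s > 0" "s * m < 1"
    by (auto simp: s_def field_simps abs_if)
  have "0 \<le> 2 * (- s * g) * g + (- s * g)\<^sup>2 * m" by (rule assms)
  also have "\<dots> = s * g\<^sup>2 * (s * m - 2)" by (simp add: algebra_simps power2_eq_square)
  finally have "0 \<le> s * g\<^sup>2 * (s * m - 2)" .
  with \<open>s * m < 1\<close> have "s * g\<^sup>2 \<le> 0"
    by (simp add: zero_le_mult_iff)
  with \<open>s > 0\<close> have "g\<^sup>2 \<le> 0"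
    by (simp add: mult_le_0_iff)
  then show ?thesis by simp
qed

lemma psd_on_kernel:
  assumes psd: "psd_on S A" and "finite S" and zero: "bilin S A x x = 0" and p: "p \<in> S"
  shows "(\<Sum>q\<in>S. A p q * x q) = 0"
proof -
  define d where "d i = (if p = i then 1 else (0::real))" for i
  define g where "g = (\<Sum>q\<in>S. A p q * x q)"
  have "bilin S A x d = (\<Sum>i\<in>S. x i * A i p)"
    using \<open>finite S\<close> p by (simp add: bilin_def d_def sum_indicator_mult)
  also have "\<dots> = g"
    unfolding g_def using psd_on_sym[OF psd _ p] by (intro sum.cong refl) (metis mult.commute)
  finally have xd: "bilin S A x d = g" .
  have dx: "bilin S A d x = g"
    using \<open>finite S\<close> p
    by (simp add: bilin_def g_def d_def mult.assoc sum_distrib_left[symmetric] sum_indicator_mult)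
  have dd: "bilin S A d d = A p p"
    using \<open>finite S\<close> p by (simp add: bilin_def d_def sum_indicator_mult)
  have "0 \<le> 2 * t * g + t\<^sup>2 * A p p" for t \<comment> \<open>perturb x along the p-th coordinate\<close>
  proof -
    have "0 \<le> bilin S A (\<lambda>i. x i + t * d i) (\<lambda>i. x i + t * d i)"
      by (rule psd_on_nonneg[OF psd])
    also have "\<dots> = 2 * t * g + t\<^sup>2 * A p p"
      unfolding bilin_add_scaled xd dx dd zero by simp
    finally show ?thesis .
  qed
  then show ?thesis unfolding g_def by (rule linear_term_vanishes)
qed

lemma sum_swap_pairs:
  "(\<Sum>p\<in>T. \<Sum>q\<in>T. \<Sum>s\<in>S. \<Sum>s'\<in>S. f p q s s') = (\<Sum>s\<in>S. \<Sum>s'\<in>S. \<Sum>p\<in>T. \<Sum>q\<in>T. f p q s s')"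
proof -
  have "(\<Sum>p\<in>T. \<Sum>q\<in>T. \<Sum>s\<in>S. \<Sum>s'\<in>S. f p q s s') = (\<Sum>p\<in>T. \<Sum>s\<in>S. \<Sum>q\<in>T. \<Sum>s'\<in>S. f p q s s')"
    by (rule sum.cong[OF refl], rule sum.swap)
  also have "\<dots> = (\<Sum>s\<in>S. \<Sum>p\<in>T. \<Sum>q\<in>T. \<Sum>s'\<in>S. f p q s s')"
    by (rule sum.swap)
  also have "\<dots> = (\<Sum>s\<in>S. \<Sum>p\<in>T. \<Sum>s'\<in>S. \<Sum>q\<in>T. f p q s s')"
    by (rule sum.cong[OF refl], rule sum.cong[OF refl], rule sum.swap)
  also have "\<dots> = (\<Sum>s\<in>S. \<Sum>s'\<in>S. \<Sum>p\<in>T. \<Sum>q\<in>T. f p q s s')"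
    by (rule sum.cong[OF refl], rule sum.swap)
  finally show ?thesis .
qed

lemma sum_product_middle:
  "(\<Sum>p\<in>T. a p) * (m :: real) * (\<Sum>q\<in>T. b q) = (\<Sum>p\<in>T. \<Sum>q\<in>T. a p * m * b q)"
proof -
  have "(\<Sum>p\<in>T. a p) * m * (\<Sum>q\<in>T. b q) = (\<Sum>p\<in>T. a p * m * (\<Sum>q\<in>T. b q))"
    by (simp add: sum_distrib_right)
  also have "\<dots> = (\<Sum>p\<in>T. \<Sum>q\<in>T. a p * m * b q)"
    by (simp add: sum_distrib_left)
  finally show ?thesis .
qed

lemma psd_on_congruence:
  assumes psd: "psd_on S M"
    and A: "\<And>p q. p \<in> T \<Longrightarrow> q \<in> T \<Longrightarrow> A p q = bilin S M (G p) (G q)"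
  shows "psd_on T A"
  unfolding psd_on_iff_bilin
proof (intro conjI ballI allI)
  fix p q assume "p \<in> T" "q \<in> T"
  have "(\<Sum>s\<in>S. \<Sum>s'\<in>S. G p s * M s s' * G q s') = (\<Sum>s'\<in>S. \<Sum>s\<in>S. G q s' * M s' s * G p s)"
    using psd by (subst sum.swap) (auto simp: psd_on_def mult_ac intro!: sum.cong)
  with A \<open>p \<in> T\<close> \<open>q \<in> T\<close> show "A p q = A q p" by (simp add: bilin_def)
next
  fix x
  define y where "y s = (\<Sum>p\<in>T. x p * G p s)" for s
  have "bilin T A x x = (\<Sum>p\<in>T. \<Sum>q\<in>T. \<Sum>s\<in>S. \<Sum>s'\<in>S. (x p * G p s) * M s s' * (x q * G q s'))"
    using A by (auto simp: bilin_def sum_distrib_left sum_distrib_right mult_ac intro!: sum.cong)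
  also have "\<dots> = (\<Sum>s\<in>S. \<Sum>s'\<in>S. \<Sum>p\<in>T. \<Sum>q\<in>T. (x p * G p s) * M s s' * (x q * G q s'))"
    by (rule sum_swap_pairs)
  also have "\<dots> = bilin S M y y"
    unfolding bilin_def y_def sum_product_middle ..
  finally show "0 \<le> bilin T A x x" using psd by (simp add: psd_on_iff_bilin)
qed

lemma psd_on_add:
  assumes "psd_on S A" "psd_on S B"
  shows "psd_on S (\<lambda>p q. A p q + B p q)"
  using assms unfolding psd_on_def by (simp add: algebra_simps sum.distrib add_nonneg_nonneg)

lemma psd_on_identity: "finite R \<Longrightarrow> psd_on R (\<lambda>e e'. if e = e' then 1 else 0)"
  unfolding psd_on_iff_bilin bilin_def
  by (simp add: mult.assoc sum_distrib_left[symmetric] sum_indicator_mult sum_nonneg)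

section \<open>Invariance under all permutations of positions\<close>

lemma image_comp_transpose:
  "(x \<in> A \<longleftrightarrow> y \<in> A) \<Longrightarrow> (u \<circ> Transposition.transpose x y) ` A = u ` A"
  by (metis image_comp transpose_image_eq)

lemma transpose_invariance:
  fixes \<Phi> :: "(nat \<Rightarrow> 'a) \<Rightarrow> 'b"
  assumes adjacent: "\<And>w n. Suc n < m \<Longrightarrow> w ` {..<m} \<subseteq> I \<Longrightarrow>
      \<Phi> (w \<circ> Transposition.transpose n (Suc n)) = \<Phi> w"
    and "a < b" "b < m" "w ` {..<m} \<subseteq> I"
  shows "\<Phi> (w \<circ> Transposition.transpose a b) = \<Phi> w"
  using assms(2-4)
proof (induction b arbitrary: w)
  case 0
  then show ?case by simp
next
  case (Suc c)
  let ?t = "Transposition.transpose"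
  show ?case
  proof (cases "a = c")
    case True
    with Suc.prems show ?thesis using adjacent[of c w] by blast
  next
    case False
    with Suc.prems have "a < c" by simp
    let ?u = "w \<circ> ?t c (Suc c)"
    have "?t a (Suc c) = ?t (Suc c) c \<circ> ?t c a \<circ> ?t (Suc c) c"
      using \<open>a < c\<close> by (auto simp: fun_eq_iff Transposition.transpose_def)
    then have decomp: "w \<circ> ?t a (Suc c) = ?u \<circ> ?t a c \<circ> ?t c (Suc c)"
      by (simp add: transpose_commute comp_assoc)
    have image: "(u \<circ> ?t c (Suc c)) ` {..<m} = u ` {..<m}" for u :: "nat \<Rightarrow> 'a"
      using Suc.prems by (intro image_comp_transpose) simp
    have "(?u \<circ> ?t a c) ` {..<m} = ?u ` {..<m}"
      using Suc.prems \<open>a < c\<close> by (intro image_comp_transpose) simp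
    also have "\<dots> = w ` {..<m}" by (rule image)
    finally have "(?u \<circ> ?t a c) ` {..<m} = w ` {..<m}" .
    then have "\<Phi> (w \<circ> ?t a (Suc c)) = \<Phi> (?u \<circ> ?t a c)"
      unfolding decomp using adjacent[of c "?u \<circ> ?t a c"] Suc.prems by simp
    also have "\<dots> = \<Phi> ?u"
      using Suc.prems image[of w] \<open>a < c\<close> by (intro Suc.IH) auto
    also have "\<dots> = \<Phi> w"
      using adjacent[of c w] Suc.prems by blast
    finally show ?thesis .
  qed
qed

lemma permutation_invariance:
  fixes \<Phi> :: "(nat \<Rightarrow> 'a) \<Rightarrow> 'b"
  assumes adjacent: "\<And>w n. Suc n < m \<Longrightarrow> w ` {..<m} \<subseteq> I \<Longrightarrow>
      \<Phi> (w \<circ> Transposition.transpose n (Suc n)) = \<Phi> w"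
    and p: "p permutes {..<m}" and w: "w ` {..<m} \<subseteq> I"
  shows "\<Phi> (w \<circ> p) = \<Phi> w"
  using p finite_lessThan[of m] w
proof (induction arbitrary: w rule: permutes_induct)
  case id
  then show ?case by simp
next
  case (swap a b p)
  let ?t = "Transposition.transpose a b"
  have transposition: "\<Phi> (u \<circ> Transposition.transpose x y) = \<Phi> u"
    if "x < y" "y < m" "u ` {..<m} \<subseteq> I" for x y u
    using transpose_invariance[where \<Phi>=\<Phi> and m=m and I=I] adjacent that by blast
  have "\<Phi> (u \<circ> ?t) = \<Phi> u" if "u ` {..<m} \<subseteq> I" for u
    using swap.hyps that transposition[of a b u] transposition[of b a u]
    by (cases "a < b") (auto simp: transpose_commute)
  moreover have "(w \<circ> ?t) ` {..<m} \<subseteq> I"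
    using swap by (subst image_comp_transpose) auto
  ultimately show ?case using swap.IH swap.prems by (metis comp_assoc)
qed

lemma pseudomoment4I:
  assumes psd: "psd_on ({1..N} \<times> {1..N}) Y"
    and contract: "\<And>i j k k'. i \<in> {1..N} \<Longrightarrow> j \<in> {1..N} \<Longrightarrow> k \<in> {1..N} \<Longrightarrow> k' \<in> {1..N} \<Longrightarrow>
      Y (i, j) (k, k) = Y (i, j) (k', k')"
    and diagonal: "\<And>i. i \<in> {1..N} \<Longrightarrow> Y (i, i) (i, i) = 1"
    and swap_first: "\<And>i j k l. i \<in> {1..N} \<Longrightarrow> j \<in> {1..N} \<Longrightarrow> k \<in> {1..N} \<Longrightarrow> l \<in> {1..N} \<Longrightarrow>
      Y (j, i) (k, l) = Y (i, j) (k, l)"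
    and swap_middle: "\<And>i j k l. i \<in> {1..N} \<Longrightarrow> j \<in> {1..N} \<Longrightarrow> k \<in> {1..N} \<Longrightarrow> l \<in> {1..N} \<Longrightarrow>
      Y (i, k) (j, l) = Y (i, j) (k, l)"
    and swap_last: "\<And>i j k l. i \<in> {1..N} \<Longrightarrow> j \<in> {1..N} \<Longrightarrow> k \<in> {1..N} \<Longrightarrow> l \<in> {1..N} \<Longrightarrow>
      Y (i, j) (l, k) = Y (i, j) (k, l)"
  shows "pseudomoment4 N Y"
  unfolding pseudomoment4_def Let_def
proof (intro conjI ballI allI impI)
  fix i j k l and p :: "nat \<Rightarrow> nat"
  assume ijkl: "i \<in> {1..N}" "j \<in> {1..N}" "k \<in> {1..N}" "l \<in> {1..N}" and p: "p permutes {..<4}"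
  define \<Phi> where "\<Phi> w = Y (w 0, w 1) (w 2, w 3)" for w :: "nat \<Rightarrow> nat"
  have "\<Phi> (w \<circ> Transposition.transpose n (Suc n)) = \<Phi> w"
    if "Suc n < 4" "w ` {..<4} \<subseteq> {1..N}" for w n
  proof -
    have mem: "w 0 \<in> {1..N}" "w 1 \<in> {1..N}" "w 2 \<in> {1..N}" "w 3 \<in> {1..N}"
      using that(2) by (auto simp: image_subset_iff)
    from that(1) consider "n = 0" | "n = 1" | "n = 2" by linarith
    then show ?thesis
    proof cases
      case 1
      then have "\<Phi> (w \<circ> Transposition.transpose n (Suc n)) = Y (w 1, w 0) (w 2, w 3)"
        by (simp add: \<Phi>_def Transposition.transpose_def)
      with mem show ?thesis by (simp add: \<Phi>_def swap_first)
    next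
      case 2
      then have "\<Phi> (w \<circ> Transposition.transpose n (Suc n)) = Y (w 0, w 2) (w 1, w 3)"
        by (simp add: \<Phi>_def Transposition.transpose_def numeral_2_eq_2 numeral_3_eq_3)
      with mem show ?thesis by (simp add: \<Phi>_def swap_middle)
    next
      case 3
      then have "\<Phi> (w \<circ> Transposition.transpose n (Suc n)) = Y (w 0, w 1) (w 3, w 2)"
        by (simp add: \<Phi>_def Transposition.transpose_def numeral_2_eq_2 numeral_3_eq_3)
      with mem show ?thesis by (simp add: \<Phi>_def swap_last)
    qed
  qed
  moreover have "(\<lambda>n. [i, j, k, l] ! n) ` {..<4} \<subseteq> {1..N}"
    using ijkl by (auto simp: lessThan_nat_numeral)
  ultimately have "\<Phi> ((\<lambda>n. [i, j, k, l] ! n) \<circ> p) = \<Phi> (\<lambda>n. [i, j, k, l] ! n)"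
    by (rule permutation_invariance[OF _ p])
  then show "Y ([i, j, k, l] ! p 0, [i, j, k, l] ! p 1) ([i, j, k, l] ! p 2, [i, j, k, l] ! p 3) =
      Y (i, j) (k, l)"
    by (simp add: \<Phi>_def)
qed (use psd contract diagonal in blast)+

section \<open>Block vectors\<close>

definition block_vec :: "'i \<Rightarrow> ('r \<Rightarrow> real) \<Rightarrow> 'i \<times> 'r \<Rightarrow> real" where
  "block_vec j u = (\<lambda>(i, a). if i = j then u a else 0)"

lemma sum_block_vec_right:
  assumes "finite I" "j \<in> I"
  shows "(\<Sum>q\<in>I \<times> R. f q * block_vec j u q) = (\<Sum>b\<in>R. f (j, b) * u b)"
proof -
  have "(\<Sum>q\<in>I \<times> R. f q * block_vec j u q) = (\<Sum>i\<in>I. if i = j then (\<Sum>b\<in>R. f (i, b) * u b) else 0)"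
    unfolding sum.cartesian_product' by (intro sum.cong refl) (simp add: block_vec_def)
  with assms show ?thesis by simp
qed

lemma sum_block_vec_left:
  assumes "finite I" "j \<in> I"
  shows "(\<Sum>q\<in>I \<times> R. block_vec j u q * f q) = (\<Sum>b\<in>R. u b * f (j, b))"
  using sum_block_vec_right[OF assms, of f] by (simp add: mult.commute)

lemma bilin_block_vec:
  assumes "finite I" "j \<in> I" "k \<in> I"
  shows "bilin (I \<times> R) M (block_vec j u) (block_vec k w) = (\<Sum>a\<in>R. \<Sum>b\<in>R. u a * M (j, a) (k, b) * w b)"
proof -
  have "bilin (I \<times> R) M (block_vec j u) (block_vec k w) =
      (\<Sum>p\<in>I \<times> R. block_vec j u p * (\<Sum>q\<in>I \<times> R. M p q * block_vec k w q))"
    by (simp add: bilin_def sum_distrib_left mult.assoc)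
  also have "\<dots> = (\<Sum>a\<in>R. u a * (\<Sum>b\<in>R. M (j, a) (k, b) * w b))"
    using assms by (simp add: sum_block_vec_right sum_block_vec_left)
  finally show ?thesis by (simp add: sum_distrib_left mult.assoc)
qed

lemma sum_block_vec_diff:
  assumes "finite I" "j \<in> I" "k \<in> I"
  shows "(\<Sum>q\<in>I \<times> R. f q * (block_vec j u q - block_vec k w q)) =
    (\<Sum>b\<in>R. f (j, b) * u b) - (\<Sum>b\<in>R. f (k, b) * w b)"
  using assms by (simp add: right_diff_distrib sum_subtractf sum_block_vec_right)

lemma quadvec_eq_sum_blockform:
  "quadvec N r v M = (\<Sum>j\<in>{1..N}. \<Sum>k\<in>{1..N}. blockform r v M j j k k)"
  unfolding quadvec_def blockform_def sum.cartesian_product' fst_conv snd_conv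
  by (rule sum.cong[OF refl], rule sum.swap)

section \<open>Tight certificates yield pseudomoment matrices\<close>

locale tight_certificate =
  fixes N r :: nat and v :: "nat \<Rightarrow> nat \<Rightarrow> real" and M :: "nat \<times> nat \<Rightarrow> nat \<times> nat \<Rightarrow> real"
  assumes norm_sum: "(\<Sum>i\<in>{1..N}. \<Sum>a\<in>{1..r}. (v i a)\<^sup>2) = real N"
    and in_Bset: "M \<in> Bset N r"
    and quadvec_eq: "quadvec N r v M = (real N)\<^sup>2"
begin

lemma psd: "psd_on ({1..N} \<times> {1..r}) M"
  using in_Bset by (simp add: Bset_def)

lemma diagonal_block:
  "i \<in> {1..N} \<Longrightarrow> a \<in> {1..r} \<Longrightarrow> b \<in> {1..r} \<Longrightarrow> M (i, a) (i, b) = (if a = b then 1 else 0)"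
  using in_Bset by (simp add: Bset_def)

lemma block_sym:
  "i \<in> {1..N} \<Longrightarrow> j \<in> {1..N} \<Longrightarrow> a \<in> {1..r} \<Longrightarrow> b \<in> {1..r} \<Longrightarrow> M (i, a) (j, b) = M (i, b) (j, a)"
  using in_Bset by (simp add: Bset_def)

lemma sym: "p \<in> {1..N} \<times> {1..r} \<Longrightarrow> q \<in> {1..N} \<times> {1..r} \<Longrightarrow> M p q = M q p"
  using psd by (rule psd_on_sym)

lemma bilin_same_block:
  assumes "j \<in> {1..N}"
  shows "bilin ({1..N} \<times> {1..r}) M (block_vec j u) (block_vec j w) = (\<Sum>a\<in>{1..r}. u a * w a)"
proof -
  have "bilin ({1..N} \<times> {1..r}) M (block_vec j u) (block_vec j w) =
      (\<Sum>a\<in>{1..r}. \<Sum>b\<in>{1..r}. u a * (if a = b then 1 else 0) * w b)"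
    using assms by (simp add: bilin_block_vec diagonal_block)
  also have "\<dots> = (\<Sum>a\<in>{1..r}. u a * w a)"
    by (intro sum.cong refl) (simp add: mult.assoc sum_distrib_left[symmetric] sum_indicator_mult)
  finally show ?thesis .
qed

lemma bilin_block_diff:
  assumes "j \<in> {1..N}" "k \<in> {1..N}"
  shows "bilin ({1..N} \<times> {1..r}) M (\<lambda>q. block_vec j (v j) q - block_vec k (v k) q)
      (\<lambda>q. block_vec j (v j) q - block_vec k (v k) q) =
    gram r v j j - blockform r v M j j k k - blockform r v M k k j j + gram r v k k"
  using assms unfolding bilin_diff_diff
  by (simp only: bilin_same_block) (simp add: bilin_block_vec gram_def blockform_def)

text \<open>Each left hand side is a value x^T M x \<ge> 0, and summed over all j, k they add up to
  2 N \<Sum> |v_j|^2 - 2 v^T M v = 0.\<close>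
lemma pairwise_tight:
  assumes "j \<in> {1..N}" "k \<in> {1..N}"
  shows "gram r v j j - blockform r v M j j k k - blockform r v M k k j j + gram r v k k = 0"
proof -
  let ?d = "\<lambda>j k. gram r v j j - blockform r v M j j k k - blockform r v M k k j j + gram r v k k"
  have nonneg: "0 \<le> ?d j k" if "j \<in> {1..N}" "k \<in> {1..N}" for j k
    using psd_on_nonneg[OF psd] bilin_block_diff[OF that] by metis
  have norms: "(\<Sum>j\<in>{1..N}. gram r v j j) = real N"
    using norm_sum by (simp add: gram_def power2_eq_square)
  have swap: "(\<Sum>j\<in>{1..N}. \<Sum>k\<in>{1..N}. blockform r v M k k j j) = quadvec N r v M"
    unfolding quadvec_eq_sum_blockform by (rule sum.swap)
  have "(\<Sum>j\<in>{1..N}. \<Sum>k\<in>{1..N}. ?d j k) =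
      2 * (real N * (\<Sum>j\<in>{1..N}. gram r v j j)) - 2 * quadvec N r v M"
    using swap quadvec_eq_sum_blockform
    by (simp add: sum.distrib sum_subtractf sum_distrib_left[symmetric])
  also have "\<dots> = 0"
    using norms quadvec_eq by (simp add: power2_eq_square)
  finally have "(\<Sum>j\<in>{1..N}. \<Sum>k\<in>{1..N}. ?d j k) = 0" .
  then have "(\<Sum>k\<in>{1..N}. ?d j k) = 0"
    using assms(1) nonneg by (subst (asm) sum_nonneg_eq_0_iff) (auto intro!: sum_nonneg)
  then show ?thesis
    using assms nonneg by (subst (asm) sum_nonneg_eq_0_iff) auto
qed

lemma block_action:
  assumes j: "j \<in> {1..N}" and k: "k \<in> {1..N}" and a: "a \<in> {1..r}"
  shows "(\<Sum>b\<in>{1..r}. M (j, a) (k, b) * v k b) = v j a"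
proof -
  have "(\<Sum>q\<in>{1..N} \<times> {1..r}. M (j, a) q * (block_vec j (v j) q - block_vec k (v k) q)) = 0"
    using psd_on_kernel[OF psd _ _, of _ "(j, a)"] bilin_block_diff[OF j k] pairwise_tight[OF j k] j a
    by simp
  moreover have "(\<Sum>b\<in>{1..r}. M (j, a) (j, b) * v j b) = v j a"
    using j a by (simp add: diagonal_block sum_indicator_mult)
  ultimately show ?thesis
    using j k by (simp add: sum_block_vec_diff)
qed

lemma blockform_reverse:
  assumes "i \<in> {1..N}" "j \<in> {1..N}" "k \<in> {1..N}" "l \<in> {1..N}"
  shows "blockform r v M l k j i = blockform r v M i j k l"
  unfolding blockform_def using assms
  by (subst sum.swap) (auto intro!: sum.cong simp: sym[of "(k, _)"] mult_ac)

lemma blockform_contract_right: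
  assumes "i \<in> {1..N}" "j \<in> {1..N}" "k \<in> {1..N}"
  shows "blockform r v M i j k k = gram r v i j"
proof -
  have "blockform r v M i j k k = (\<Sum>a\<in>{1..r}. v i a * (\<Sum>b\<in>{1..r}. M (j, a) (k, b) * v k b))"
    by (simp add: blockform_def sum_distrib_left mult.assoc)
  also have "\<dots> = gram r v i j"
    unfolding gram_def using assms block_action[of j k] by (intro sum.cong refl) simp
  finally show ?thesis .
qed

lemma blockform_contract_left:
  assumes "i \<in> {1..N}" "j \<in> {1..N}" "k \<in> {1..N}"
  shows "blockform r v M i j i k = gram r v j k"
proof -
  have "blockform r v M i j i k = (\<Sum>b\<in>{1..r}. v k b * (\<Sum>a\<in>{1..r}. M (j, b) (i, a) * v i a))"
    unfolding blockform_def using assms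
    by (subst sum.swap) (auto intro!: sum.cong simp: sum_distrib_left block_sym[of j i] mult_ac)
  also have "\<dots> = (\<Sum>b\<in>{1..r}. v k b * v j b)"
    using assms block_action[of j i] by (intro sum.cong refl) simp
  also have "\<dots> = gram r v j k"
    by (simp add: gram_def mult.commute)
  finally show ?thesis .
qed

lemma unit_norm:
  assumes "j \<in> {1..N}"
  shows "gram r v j j = 1"
proof -
  have "gram r v k k = gram r v j j" if "k \<in> {1..N}" for k
    using blockform_reverse[OF assms assms that that]
      blockform_contract_right[OF assms assms that] blockform_contract_right[OF that that assms]
    by simp
  then have "(\<Sum>k\<in>{1..N}. gram r v k k) = real N * gram r v j j"
    by simp
  moreover have "(\<Sum>k\<in>{1..N}. gram r v k k) = real N"
    using norm_sum by (simp add: gram_def power2_eq_square)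
  ultimately show ?thesis
    using assms by simp
qed

lemma block_exchange:
  assumes i: "i \<in> {1..N}" and j: "j \<in> {1..N}" and k: "k \<in> {1..N}" and a: "a \<in> {1..r}"
  shows "(\<Sum>b\<in>{1..r}. M (k, a) (j, b) * v i b) = (\<Sum>b\<in>{1..r}. M (k, a) (i, b) * v j b)"
proof -
  let ?x = "\<lambda>q. block_vec j (v i) q - block_vec i (v j) q"
  have "bilin ({1..N} \<times> {1..r}) M ?x ?x =
      gram r v i i - blockform r v M i j i j - blockform r v M j i j i + gram r v j j"
    using i j unfolding bilin_diff_diff
    by (simp only: bilin_same_block) (simp add: bilin_block_vec gram_def blockform_def)
  also have "\<dots> = 0"
    using i j by (simp add: blockform_contract_left unit_norm)
  finally have "(\<Sum>q\<in>{1..N} \<times> {1..r}. M (k, a) q * ?x q) = 0"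
    using psd_on_kernel[OF psd] k a by simp
  then show ?thesis
    using i j by (simp add: sum_block_vec_diff)
qed

lemma blockform_swap_middle:
  assumes "i \<in> {1..N}" "j \<in> {1..N}" "k \<in> {1..N}" "l \<in> {1..N}"
  shows "blockform r v M i k j l = blockform r v M i j k l"
  unfolding blockform_def using assms
  by (auto intro!: sum.cong simp: sym[of "(k, _)"] block_sym[of j k])

lemma blockform_swap_last:
  assumes "i \<in> {1..N}" "j \<in> {1..N}" "k \<in> {1..N}" "l \<in> {1..N}"
  shows "blockform r v M i j l k = blockform r v M i j k l"
proof -
  have "blockform r v M i j l k = (\<Sum>a\<in>{1..r}. v i a * (\<Sum>b\<in>{1..r}. M (j, a) (l, b) * v k b))"
    by (simp add: blockform_def sum_distrib_left mult.assoc)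
  also have "\<dots> = (\<Sum>a\<in>{1..r}. v i a * (\<Sum>b\<in>{1..r}. M (j, a) (k, b) * v l b))"
    using assms block_exchange[of k l j] by (intro sum.cong refl) simp
  also have "\<dots> = blockform r v M i j k l"
    by (simp add: blockform_def sum_distrib_left mult.assoc)
  finally show ?thesis .
qed

lemma blockform_swap_first:
  assumes "i \<in> {1..N}" "j \<in> {1..N}" "k \<in> {1..N}" "l \<in> {1..N}"
  shows "blockform r v M j i k l = blockform r v M i j k l"
  using assms blockform_reverse blockform_swap_last by metis

lemma blockform_diagonal:
  assumes "i \<in> {1..N}" "j \<in> {1..N}" "k \<in> {1..N}"
  shows "blockform r v M i k k j = gram r v i j"
  using assms
  by (simp add: blockform_def gram_def diagonal_block mult.assoc sum_distrib_left[symmetric]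
      sum_indicator_mult)

lemma blockform_psd:
  "psd_on ({1..N} \<times> {1..N}) (\<lambda>(i, j) (k, l). blockform r v M i j k l)"
proof (rule psd_on_congruence[OF psd, where G = "\<lambda>(i, j). block_vec j (v i)"])
  fix p q assume "p \<in> {1..N} \<times> {1..N}" "q \<in> {1..N} \<times> {1..N}"
  then obtain i j k l where pq: "p = (i, j)" "q = (k, l)"
    and ijkl: "i \<in> {1..N}" "j \<in> {1..N}" "k \<in> {1..N}" "l \<in> {1..N}"
    by auto
  have "bilin ({1..N} \<times> {1..r}) M (block_vec j (v i)) (block_vec l (v k)) = blockform r v M i j l k"
    using ijkl by (simp add: bilin_block_vec blockform_def)
  then show "(\<lambda>(i, j) (k, l). blockform r v M i j k l) p q =
      bilin ({1..N} \<times> {1..r}) M ((\<lambda>(i, j). block_vec j (v i)) p) ((\<lambda>(i, j). block_vec j (v i)) q)"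
    using blockform_swap_last[OF ijkl] pq by simp
qed

lemma pseudomoment:
  "pseudomoment4 N (\<lambda>(i, j) (k, l). blockform r v M i j k l)"
  by (rule pseudomoment4I[OF blockform_psd])
    (simp_all add: blockform_contract_right blockform_diagonal unit_norm blockform_swap_first
      blockform_swap_middle blockform_swap_last)

lemma extends_gram: "extends4 N (\<lambda>(i, j) (k, l). blockform r v M i j k l) (gram r v)"
  unfolding extends4_def
proof (intro ballI)
  fix i j assume "i \<in> {1..N}" "j \<in> {1..N}"
  moreover have "1 \<in> {1..N}" using \<open>i \<in> {1..N}\<close> by simp
  ultimately show "(\<lambda>(i, j) (k, l). blockform r v M i j k l) (1, i) (1, j) = gram r v i j"
    using blockform_swap_first[of i 1 1 j] blockform_diagonal[of i j 1] by simp
qed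

end

section \<open>Projection onto the span of finitely many vectors\<close>

definition outer_sum :: "('i \<Rightarrow> 'r \<Rightarrow> real) \<Rightarrow> ('i \<Rightarrow> 'r \<Rightarrow> real) \<Rightarrow> 'i set \<Rightarrow> 'r \<Rightarrow> 'r \<Rightarrow> real" where
  "outer_sum v L I a b = (\<Sum>i\<in>I. v i a * L i b)"

lemma outer_sum_idempotent:
  assumes "\<And>i a. i \<in> I \<Longrightarrow> a \<in> R \<Longrightarrow> (\<Sum>b\<in>R. outer_sum v L I a b * v i b) = v i a" and "a \<in> R"
  shows "(\<Sum>b\<in>R. outer_sum v L I a b * outer_sum v L I b d) = outer_sum v L I a d"
proof -
  have "(\<Sum>b\<in>R. outer_sum v L I a b * outer_sum v L I b d) =
      (\<Sum>i\<in>I. (\<Sum>b\<in>R. outer_sum v L I a b * v i b) * L i d)"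
    unfolding outer_sum_def sum_distrib_left sum_distrib_right
    by (subst sum.swap) (simp add: mult_ac)
  also have "\<dots> = outer_sum v L I a d"
    using assms by (simp add: outer_sum_def)
  finally show ?thesis .
qed

lemma residual_orthogonal:
  fixes P :: "'r \<Rightarrow> 'r \<Rightarrow> real"
  assumes sym: "\<And>a b. P a b = P b a" and reproduces: "\<And>a. a \<in> R \<Longrightarrow> (\<Sum>b\<in>R. P a b * y b) = y a"
  shows "(\<Sum>b\<in>R. (u b - (\<Sum>d\<in>R. P b d * u d)) * y b) = 0"
proof -
  have "(\<Sum>b\<in>R. (\<Sum>d\<in>R. P b d * u d) * y b) = (\<Sum>d\<in>R. u d * (\<Sum>b\<in>R. P d b * y b))"
    unfolding sum_distrib_left sum_distrib_right by (subst sum.swap) (simp add: sym mult_ac)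
  also have "\<dots> = (\<Sum>d\<in>R. u d * y d)"
    using reproduces by simp
  finally show ?thesis
    by (simp add: left_diff_distrib sum_subtractf)
qed

lemma outer_sum_insert_update:
  assumes "finite F" "x \<notin> F"
  shows "outer_sum v (\<lambda>i b. if i = x then w b / s else L i b - (\<Sum>d\<in>R. L i d * v x d) * w b / s)
      (insert x F) a b =
    outer_sum v L F a b + (v x a - (\<Sum>d\<in>R. outer_sum v L F a d * v x d)) * w b / s"
proof -
  let ?c = "\<lambda>i. \<Sum>d\<in>R. L i d * v x d"
  have "(\<Sum>i\<in>F. v i a * (if i = x then w b / s else L i b - ?c i * w b / s)) =
      (\<Sum>i\<in>F. v i a * L i b - v i a * ?c i * w b / s)"
    using assms(2) by (intro sum.cong refl) (auto simp: right_diff_distrib)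
  also have "\<dots> = outer_sum v L F a b - (\<Sum>i\<in>F. v i a * ?c i) * w b / s"
    by (simp add: outer_sum_def sum_subtractf sum_distrib_right sum_divide_distrib)
  also have "(\<Sum>i\<in>F. v i a * ?c i) = (\<Sum>d\<in>R. outer_sum v L F a d * v x d)"
    unfolding outer_sum_def sum_distrib_left sum_distrib_right by (subst sum.swap) (simp add: mult_ac)
  finally show ?thesis
    using assms by (simp add: outer_sum_def algebra_simps add_divide_distrib diff_divide_distrib)
qed

text \<open>One Gram-Schmidt step: with w the residual of v x and s = |w|^2, adding w w^T / s keeps
  the projection property. When s = 0 the residual vanishes, and the junk value w / 0 = 0 is
  harmless.\<close>
lemma projection_insert:
  fixes v :: "'i \<Rightarrow> 'r \<Rightarrow> real"
  assumes "finite F" "x \<notin> F" "finite R"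
    and sym: "\<And>a b. outer_sum v L F a b = outer_sum v L F b a"
    and reproduces: "\<And>i a. i \<in> F \<Longrightarrow> a \<in> R \<Longrightarrow> (\<Sum>b\<in>R. outer_sum v L F a b * v i b) = v i a"
  shows "\<exists>L'. (\<forall>a b. outer_sum v L' (insert x F) a b = outer_sum v L' (insert x F) b a) \<and>
    (\<forall>i\<in>insert x F. \<forall>a\<in>R. (\<Sum>b\<in>R. outer_sum v L' (insert x F) a b * v i b) = v i a)"
proof -
  let ?P = "outer_sum v L F"
  define w where "w a = v x a - (\<Sum>d\<in>R. ?P a d * v x d)" for a
  define s where "s = (\<Sum>b\<in>R. w b * w b)"
  define L' where "L' = (\<lambda>i b. if i = x then w b / s else L i b - (\<Sum>d\<in>R. L i d * v x d) * w b / s)"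
  have P': "outer_sum v L' (insert x F) a b = ?P a b + w a * w b / s" for a b
    unfolding L'_def by (subst outer_sum_insert_update[OF assms(1,2)]) (simp add: w_def)
  have w_orth: "(\<Sum>b\<in>R. w b * v i b) = 0" if "i \<in> F" for i
    unfolding w_def using residual_orthogonal[OF sym reproduces[OF that]] by simp
  have Pw: "(\<Sum>b\<in>R. ?P a b * w b) = 0" if "a \<in> R" for a
  proof -
    have "(\<Sum>b\<in>R. ?P a b * (\<Sum>d\<in>R. ?P b d * v x d)) = (\<Sum>d\<in>R. (\<Sum>b\<in>R. ?P a b * ?P b d) * v x d)"
      unfolding sum_distrib_left sum_distrib_right by (subst sum.swap) (simp add: mult_ac)
    then show ?thesis
      using outer_sum_idempotent[OF reproduces that] by (simp add: w_def right_diff_distrib sum_subtractf)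
  qed
  have w_x: "(\<Sum>b\<in>R. w b * v x b) = s"
  proof -
    have "(\<Sum>b\<in>R. w b * (\<Sum>d\<in>R. ?P b d * v x d)) = (\<Sum>d\<in>R. v x d * (\<Sum>b\<in>R. ?P d b * w b))"
      unfolding sum_distrib_left sum_distrib_right by (subst sum.swap) (simp add: sym mult_ac)
    also have "\<dots> = 0"
      using Pw by simp
    finally show ?thesis
      by (simp add: s_def w_def right_diff_distrib sum_subtractf)
  qed
  have reproduce_x: "(\<Sum>b\<in>R. ?P a b * v x b) + w a * s / s = v x a" if "a \<in> R" for a
  proof (cases "s = 0")
    case True
    then have "w a = 0"
      using that \<open>finite R\<close> by (simp add: s_def sum_nonneg_eq_0_iff)
    then show ?thesis by (simp add: w_def)
  next
    case False
    then show ?thesis by (simp add: w_def)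
  qed
  show ?thesis
  proof (intro exI conjI ballI allI)
    fix a b
    show "outer_sum v L' (insert x F) a b = outer_sum v L' (insert x F) b a"
      using sym by (simp add: P' mult.commute)
  next
    fix i a assume "i \<in> insert x F" "a \<in> R"
    have "(\<Sum>b\<in>R. outer_sum v L' (insert x F) a b * v i b) =
        (\<Sum>b\<in>R. ?P a b * v i b) + w a * (\<Sum>b\<in>R. w b * v i b) / s"
      by (simp add: P' algebra_simps sum.distrib sum_distrib_left sum_divide_distrib)
    then show "(\<Sum>b\<in>R. outer_sum v L' (insert x F) a b * v i b) = v i a"
      using \<open>i \<in> insert x F\<close> \<open>a \<in> R\<close> reproduces w_orth w_x reproduce_x by auto
  qed
qed

lemma exists_projection_onto_span:
  fixes v :: "'i \<Rightarrow> 'r \<Rightarrow> real"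
  assumes "finite I" "finite R"
  shows "\<exists>L. (\<forall>a b. outer_sum v L I a b = outer_sum v L I b a) \<and>
    (\<forall>i\<in>I. \<forall>a\<in>R. (\<Sum>b\<in>R. outer_sum v L I a b * v i b) = v i a)"
  using assms(1)
proof (induction rule: finite_induct)
  case empty
  show ?case by (auto simp: outer_sum_def)
next
  case (insert x F)
  then obtain L where "\<And>a b. outer_sum v L F a b = outer_sum v L F b a"
    and "\<And>i a. i \<in> F \<Longrightarrow> a \<in> R \<Longrightarrow> (\<Sum>b\<in>R. outer_sum v L F a b * v i b) = v i a"
    by blast
  then show ?case
    using projection_insert[OF insert.hyps(1,2) assms(2)] by blast
qed

section \<open>Pseudomoment matrices yield tight certificates\<close>

locale pseudomoment_extension =
  fixes N r :: nat and v :: "nat \<Rightarrow> nat \<Rightarrow> real" and Y :: "nat \<times> nat \<Rightarrow> nat \<times> nat \<Rightarrow> real"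
  assumes pseudomoment: "pseudomoment4 N Y"
    and extends: "extends4 N Y (gram r v)"
begin

lemma psd: "psd_on ({1..N} \<times> {1..N}) Y"
  using pseudomoment by (simp add: pseudomoment4_def)

lemma sym: "p \<in> {1..N} \<times> {1..N} \<Longrightarrow> q \<in> {1..N} \<times> {1..N} \<Longrightarrow> Y p q = Y q p"
  using psd by (rule psd_on_sym)

lemma permuted:
  assumes "p permutes {..<4}" "i \<in> {1..N}" "j \<in> {1..N}" "k \<in> {1..N}" "l \<in> {1..N}"
  shows "Y ([i, j, k, l] ! p 0, [i, j, k, l] ! p 1) ([i, j, k, l] ! p 2, [i, j, k, l] ! p 3) = Y (i, j) (k, l)"
  using pseudomoment assms unfolding pseudomoment4_def Let_def by blast

lemma
  assumes "i \<in> {1..N}" "j \<in> {1..N}" "k \<in> {1..N}" "l \<in> {1..N}"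
  shows swap_first: "Y (j, i) (k, l) = Y (i, j) (k, l)"
    and swap_middle: "Y (i, k) (j, l) = Y (i, j) (k, l)"
    and swap_last: "Y (i, j) (l, k) = Y (i, j) (k, l)"
  using permuted[OF permutes_swap_id[of 0 "{..<4}" 1] assms]
    permuted[OF permutes_swap_id[of 1 "{..<4}" 2] assms]
    permuted[OF permutes_swap_id[of 2 "{..<4}" 3] assms]
  by (simp_all add: Transposition.transpose_def)

lemma swap_outer_middle:
  assumes "i \<in> {1..N}" "j \<in> {1..N}" "k \<in> {1..N}" "l \<in> {1..N}"
  shows "Y (i, l) (k, j) = Y (i, j) (k, l)"
  using assms swap_middle swap_last by metis

lemma contract_gram:
  assumes i: "i \<in> {1..N}" and j: "j \<in> {1..N}" and l: "l \<in> {1..N}"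
  shows "Y (j, i) (j, l) = gram r v i l"
proof -
  have one: "1 \<in> {1..N}" using i by simp
  have "Y (j, i) (j, l) = Y (i, l) (j, j)"
    using assms swap_first swap_middle swap_outer_middle by metis
  also have "\<dots> = Y (i, l) (1, 1)"
    using pseudomoment assms one unfolding pseudomoment4_def by blast
  also have "\<dots> = Y (1, i) (1, l)"
    using assms one swap_first swap_middle swap_last by metis
  also have "\<dots> = gram r v i l"
    using extends i l by (simp add: extends4_def)
  finally show ?thesis .
qed

lemma contract_one:
  assumes "j \<in> {1..N}" "k \<in> {1..N}"
  shows "Y (j, j) (k, k) = 1"
  using pseudomoment assms unfolding pseudomoment4_def by metis

lemma unit_norm:
  assumes "i \<in> {1..N}"
  shows "gram r v i i = 1"
  using contract_gram[OF assms assms assms] contract_one[OF assms assms] by simp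

lemma norm_sum:
  "(\<Sum>i\<in>{1..N}. \<Sum>a\<in>{1..r}. (v i a)\<^sup>2) = real N"
proof -
  have "(\<Sum>i\<in>{1..N}. \<Sum>a\<in>{1..r}. (v i a)\<^sup>2) = (\<Sum>i\<in>{1..N}. gram r v i i)"
    by (simp add: gram_def power2_eq_square)
  also have "\<dots> = real N"
    using unit_norm by simp
  finally show ?thesis .
qed

lemma linear_relation_kernel:
  assumes c: "\<And>b. b \<in> {1..r} \<Longrightarrow> (\<Sum>p\<in>{1..N}. c p * v p b) = 0"
    and j: "j \<in> {1..N}" and q: "q \<in> {1..N}" and k: "k \<in> {1..N}"
  shows "(\<Sum>p\<in>{1..N}. c p * Y (p, j) (q, k)) = 0"
proof -
  have "bilin ({1..N} \<times> {1..N}) Y (block_vec j c) (block_vec j c) =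
      (\<Sum>p\<in>{1..N}. \<Sum>p'\<in>{1..N}. \<Sum>b\<in>{1..r}. (c p * v p b) * (c p' * v p' b))"
    using j by (auto simp: bilin_block_vec contract_gram gram_def sum_distrib_left mult_ac intro!: sum.cong)
  also have "\<dots> = (\<Sum>b\<in>{1..r}. (\<Sum>p\<in>{1..N}. c p * v p b) * (\<Sum>p'\<in>{1..N}. c p' * v p' b))"
    unfolding sum_product by (subst sum.swap, rule sum.cong[OF refl], rule sum.swap)
  also have "\<dots> = 0"
    using c by simp
  finally have "(\<Sum>s\<in>{1..N} \<times> {1..N}. Y (q, k) s * block_vec j c s) = 0"
    using psd_on_kernel[OF psd] q k by simp
  then have "(\<Sum>p\<in>{1..N}. Y (q, k) (j, p) * c p) = 0"
    using j by (simp add: sum_block_vec_right)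
  moreover have "Y (q, k) (j, p) = Y (p, j) (q, k)" if "p \<in> {1..N}" for p
    using sym[of "(q, k)" "(j, p)"] swap_first[of p j q k] that j q k by simp
  ultimately show ?thesis
    by (simp add: mult.commute)
qed

end

locale pseudomoment_lift = pseudomoment_extension +
  fixes L :: "nat \<Rightarrow> nat \<Rightarrow> real"
  assumes projection_sym: "\<And>a b. outer_sum v L {1..N} a b = outer_sum v L {1..N} b a"
    and projection_fixes: "\<And>i a. i \<in> {1..N} \<Longrightarrow> a \<in> {1..r} \<Longrightarrow>
      (\<Sum>b\<in>{1..r}. outer_sum v L {1..N} a b * v i b) = v i a"
begin

abbreviation P :: "nat \<Rightarrow> nat \<Rightarrow> real" where
  "P \<equiv> outer_sum v L {1..N}"

lemma projection_idempotent: "a \<in> {1..r} \<Longrightarrow> (\<Sum>b\<in>{1..r}. P a b * P b d) = P a d"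
  by (rule outer_sum_idempotent[OF projection_fixes])

definition lifted_moment :: "nat \<Rightarrow> nat \<Rightarrow> nat \<Rightarrow> nat \<Rightarrow> real" where
  "lifted_moment j a k b = (\<Sum>i\<in>{1..N}. \<Sum>l\<in>{1..N}. L i a * Y (j, i) (k, l) * L l b)"

text \<open>Block (j, k) is L^T Y_[jk] L + (I - P), where Y_[jk] has entries Y (j, i) (k, l); on the
  diagonal the first term is P, so the complement I - P makes the diagonal blocks the identity.\<close>
definition certificate :: "nat \<times> nat \<Rightarrow> nat \<times> nat \<Rightarrow> real" where
  "certificate = (\<lambda>(j, a) (k, b). lifted_moment j a k b + ((if a = b then 1 else 0) - P a b))"

lemma projection_gram:
  assumes "a \<in> {1..r}"
  shows "(\<Sum>e\<in>{1..r}. P e a * P e b) = P a b"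
proof -
  have "(\<Sum>e\<in>{1..r}. P e a * P e b) = (\<Sum>e\<in>{1..r}. P a e * P e b)"
    using projection_sym by (intro sum.cong refl) metis
  also have "\<dots> = P a b"
    by (rule projection_idempotent[OF assms])
  finally show ?thesis .
qed

lemma complement_gram:
  assumes "a \<in> {1..r}" "b \<in> {1..r}"
  shows "bilin {1..r} (\<lambda>e e'. if e = e' then 1 else 0)
      (\<lambda>e. (if a = e then 1 else 0) - P e a) (\<lambda>e. (if b = e then 1 else 0) - P e b) =
    (if a = b then 1 else 0) - P a b"
proof -
  have "bilin {1..r} (\<lambda>e e'. if e = e' then 1 else 0)
      (\<lambda>e. (if a = e then 1 else 0) - P e a) (\<lambda>e. (if b = e then 1 else 0) - P e b) =
    (if a = b then 1 else 0) - P b a - P a b + (\<Sum>e\<in>{1..r}. P e a * P e b)"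
    using assms
    by (simp add: bilin_def mult.assoc sum_distrib_left[symmetric] sum_indicator_mult algebra_simps
        sum.distrib sum_subtractf)
  then show ?thesis
    using projection_sym[of b a] projection_gram[OF assms(1)] by simp
qed

lemma certificate_psd: "psd_on ({1..N} \<times> {1..r}) certificate"
proof -
  have "psd_on ({1..N} \<times> {1..r}) (\<lambda>(j, a) (k, b). lifted_moment j a k b)"
  proof (rule psd_on_congruence[OF psd, where G = "\<lambda>(j, a). block_vec j (\<lambda>i. L i a)"], clarify)
    fix j a k b assume "j \<in> {1..N}" "k \<in> {1..N}"
    then show "lifted_moment j a k b = bilin ({1..N} \<times> {1..N}) Y (block_vec j (\<lambda>i. L i a)) (block_vec k (\<lambda>i. L i b))"
      by (simp add: bilin_block_vec lifted_moment_def)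
  qed
  moreover have "psd_on ({1..N} \<times> {1..r}) (\<lambda>(j, a) (k, b). (if a = b then 1 else 0) - P a b)"
  proof (rule psd_on_congruence[OF psd_on_identity[OF finite_atLeastAtMost],
        where G = "\<lambda>(j, a) e. (if a = e then 1 else 0) - P e a"], clarify)
    fix j a k b assume "a \<in> {1..r}" "b \<in> {1..r}"
    from complement_gram[OF this] show "(if a = b then 1 else 0) - P a b = bilin {1..r} (\<lambda>e e'. if e = e' then 1 else 0)
        (\<lambda>e. (if a = e then 1 else 0) - P e a) (\<lambda>e. (if b = e then 1 else 0) - P e b)"
      by simp
  qed
  ultimately have "psd_on ({1..N} \<times> {1..r})
      (\<lambda>p q. (\<lambda>(j, a) (k, b). lifted_moment j a k b) p q + (\<lambda>(j, a) (k, b). (if a = b then 1 else 0) - P a b) p q)"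
    by (rule psd_on_add)
  moreover have "(\<lambda>p q. (\<lambda>(j, a) (k, b). lifted_moment j a k b) p q +
      (\<lambda>(j, a) (k, b). (if a = b then 1 else 0) - P a b) p q) = certificate"
    by (auto simp: certificate_def fun_eq_iff)
  ultimately show ?thesis by simp
qed

lemma lifted_moment_diagonal:
  assumes "j \<in> {1..N}" "a \<in> {1..r}"
  shows "lifted_moment j a j b = P a b"
proof -
  have "lifted_moment j a j b =
      (\<Sum>i\<in>{1..N}. \<Sum>l\<in>{1..N}. \<Sum>c\<in>{1..r}. (v i c * L i a) * (v l c * L l b))"
    using assms
    by (auto simp: lifted_moment_def contract_gram gram_def sum_distrib_left sum_distrib_right mult_ac
        intro!: sum.cong)
  also have "\<dots> = (\<Sum>c\<in>{1..r}. (\<Sum>i\<in>{1..N}. v i c * L i a) * (\<Sum>l\<in>{1..N}. v l c * L l b))"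
    unfolding sum_product by (subst sum.swap, rule sum.cong[OF refl], rule sum.swap)
  also have "\<dots> = P a b"
    using projection_gram[OF assms(2)] by (simp add: outer_sum_def)
  finally show ?thesis .
qed

lemma lifted_moment_block_sym:
  assumes "j \<in> {1..N}" "k \<in> {1..N}"
  shows "lifted_moment j b k a = lifted_moment j a k b"
proof -
  have "lifted_moment j b k a = (\<Sum>l\<in>{1..N}. \<Sum>i\<in>{1..N}. L i b * Y (j, i) (k, l) * L l a)"
    unfolding lifted_moment_def by (rule sum.swap)
  also have "\<dots> = lifted_moment j a k b"
    unfolding lifted_moment_def
  proof (intro sum.cong refl)
    fix x y assume "x \<in> {1..N}" "y \<in> {1..N}"
    then show "L y b * Y (j, y) (k, x) * L x a = L x a * Y (j, x) (k, y) * L y b"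
      using swap_outer_middle[of j x k y] assms by (simp add: mult_ac)
  qed
  finally show ?thesis .
qed

lemma certificate_in_Bset: "certificate \<in> Bset N r"
  unfolding Bset_def
  using certificate_psd lifted_moment_diagonal lifted_moment_block_sym projection_sym by (auto simp: certificate_def)

lemma span_coefficients_reproduce:
  assumes i: "i \<in> {1..N}" and "j \<in> {1..N}" "q \<in> {1..N}" "k \<in> {1..N}"
  shows "(\<Sum>p\<in>{1..N}. (\<Sum>a\<in>{1..r}. v i a * L p a) * Y (p, j) (q, k)) = Y (i, j) (q, k)"
proof -
  define c where "c p = (\<Sum>a\<in>{1..r}. v i a * L p a) - (if i = p then 1 else 0)" for p
  have "(\<Sum>p\<in>{1..N}. c p * v p b) = 0" if "b \<in> {1..r}" for b
  proof -
    have "(\<Sum>p\<in>{1..N}. (\<Sum>a\<in>{1..r}. v i a * L p a) * v p b) = (\<Sum>a\<in>{1..r}. P b a * v i a)"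
      unfolding outer_sum_def sum_distrib_left sum_distrib_right by (subst sum.swap) (simp add: mult_ac)
    also have "\<dots> = v i b"
      using projection_fixes[OF i that] .
    finally show ?thesis
      using i by (simp add: c_def left_diff_distrib sum_subtractf sum_indicator_mult)
  qed
  then have "(\<Sum>p\<in>{1..N}. c p * Y (p, j) (q, k)) = 0"
    using linear_relation_kernel assms by blast
  then show ?thesis
    using i by (simp add: c_def left_diff_distrib sum_subtractf sum_indicator_mult)
qed

lemma lifted_moment_sandwich:
  assumes "i \<in> {1..N}" "j \<in> {1..N}" "k \<in> {1..N}" "l \<in> {1..N}"
  shows "(\<Sum>a\<in>{1..r}. \<Sum>b\<in>{1..r}. v i a * lifted_moment j a k b * v l b) = Y (i, j) (k, l)"
proof -
  define \<alpha> where "\<alpha> p = (\<Sum>a\<in>{1..r}. v i a * L p a)" for p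
  define \<beta> where "\<beta> q = (\<Sum>b\<in>{1..r}. v l b * L q b)" for q
  have "(\<Sum>a\<in>{1..r}. \<Sum>b\<in>{1..r}. v i a * lifted_moment j a k b * v l b) =
      (\<Sum>a\<in>{1..r}. \<Sum>b\<in>{1..r}. \<Sum>p\<in>{1..N}. \<Sum>q\<in>{1..N}. (v i a * L p a) * Y (j, p) (k, q) * (v l b * L q b))"
    by (simp add: lifted_moment_def sum_distrib_left sum_distrib_right mult_ac)
  also have "\<dots> = (\<Sum>p\<in>{1..N}. \<Sum>q\<in>{1..N}. \<alpha> p * Y (j, p) (k, q) * \<beta> q)"
    unfolding \<alpha>_def \<beta>_def sum_product_middle by (rule sum_swap_pairs[symmetric])
  also have "\<dots> = (\<Sum>q\<in>{1..N}. (\<Sum>p\<in>{1..N}. \<alpha> p * Y (p, j) (q, k)) * \<beta> q)"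
    unfolding sum_distrib_right using assms swap_first swap_last
    by (subst sum.swap) (auto intro!: sum.cong)
  also have "\<dots> = (\<Sum>q\<in>{1..N}. \<beta> q * Y (q, k) (i, j))"
    unfolding \<alpha>_def using assms span_coefficients_reproduce sym
    by (auto intro!: sum.cong simp: mult.commute)
  also have "\<dots> = Y (l, k) (i, j)"
    unfolding \<beta>_def using assms span_coefficients_reproduce by simp
  also have "\<dots> = Y (i, j) (k, l)"
    using assms sym swap_last by (metis mem_Sigma_iff)
  finally show ?thesis .
qed

lemma complement_sandwich:
  assumes "l \<in> {1..N}"
  shows "(\<Sum>a\<in>{1..r}. \<Sum>b\<in>{1..r}. v i a * ((if a = b then 1 else 0) - P a b) * v l b) = 0"
  using assms projection_fixes
  by (simp add: right_diff_distrib left_diff_distrib sum_subtractf mult.assoc sum_indicator_mult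
      flip: sum_distrib_left)

lemma moment_eq_blockform:
  assumes "i \<in> {1..N}" "j \<in> {1..N}" "k \<in> {1..N}" "l \<in> {1..N}"
  shows "Y (i, j) (k, l) = blockform r v certificate i j k l"
proof -
  have "blockform r v certificate i j k l =
      (\<Sum>a\<in>{1..r}. \<Sum>b\<in>{1..r}. v i a * lifted_moment j a k b * v l b) +
      (\<Sum>a\<in>{1..r}. \<Sum>b\<in>{1..r}. v i a * ((if a = b then 1 else 0) - P a b) * v l b)"
    by (simp add: blockform_def certificate_def distrib_left distrib_right sum.distrib)
  then show ?thesis
    using lifted_moment_sandwich[OF assms] complement_sandwich[OF assms(4), of i] by simp
qed

lemma quadvec_certificate: "quadvec N r v certificate = (real N)\<^sup>2"
proof -
  have "quadvec N r v certificate = (\<Sum>j\<in>{1..N}. \<Sum>k\<in>{1..N}. Y (j, j) (k, k))"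
    unfolding quadvec_eq_sum_blockform using moment_eq_blockform by (auto intro!: sum.cong)
  also have "\<dots> = (real N)\<^sup>2"
    using contract_one by (simp add: power2_eq_square)
  finally show ?thesis .
qed

end

lemma (in pseudomoment_extension) exists_certificate:
  "\<exists>M\<in>Bset N r. quadvec N r v M = (real N)\<^sup>2 \<and>
    (\<forall>i\<in>{1..N}. \<forall>j\<in>{1..N}. \<forall>k\<in>{1..N}. \<forall>l\<in>{1..N}. Y (i, j) (k, l) = blockform r v M i j k l)"
proof -
  obtain L where "\<And>a b. outer_sum v L {1..N} a b = outer_sum v L {1..N} b a"
    and "\<And>i a. i \<in> {1..N} \<Longrightarrow> a \<in> {1..r} \<Longrightarrow> (\<Sum>b\<in>{1..r}. outer_sum v L {1..N} a b * v i b) = v i a"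
    using exists_projection_onto_span[of "{1..N}" "{1..r}" v] by blast
  then interpret pseudomoment_lift N r v Y L
    by unfold_locales
  show ?thesis
    using certificate_in_Bset quadvec_certificate moment_eq_blockform by blast
qed

theorem theorem1:
  fixes N r :: nat and v :: "nat \<Rightarrow> nat \<Rightarrow> real"
  shows
   "(gram r v \<in> E4 N \<longleftrightarrow>
       ((\<Sum>i\<in>{1..N}. \<Sum>a\<in>{1..r}. (v i a)\<^sup>2) = real N \<and>
        (\<exists>M\<in>Bset N r. quadvec N r v M = (real N)\<^sup>2))) \<and>
    (\<forall>Y. gram r v \<in> E4 N \<longrightarrow> pseudomoment4 N Y \<longrightarrow> extends4 N Y (gram r v) \<longrightarrow>
       (\<exists>M\<in>Bset N r. quadvec N r v M = (real N)\<^sup>2 \<and>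
          (\<forall>i\<in>{1..N}. \<forall>j\<in>{1..N}. \<forall>k\<in>{1..N}. \<forall>l\<in>{1..N}.
             Y (i,j) (k,l) = blockform r v M i j k l))) \<and>
    (\<forall>M. (\<Sum>i\<in>{1..N}. \<Sum>a\<in>{1..r}. (v i a)\<^sup>2) = real N \<longrightarrow> M \<in> Bset N r \<longrightarrow>
       quadvec N r v M = (real N)\<^sup>2 \<longrightarrow>
       pseudomoment4 N (\<lambda>(i,j) (k,l). blockform r v M i j k l) \<and>
       extends4 N (\<lambda>(i,j) (k,l). blockform r v M i j k l) (gram r v))"
proof -
  have part_a: "(\<Sum>i\<in>{1..N}. \<Sum>a\<in>{1..r}. (v i a)\<^sup>2) = real N \<and>
      (\<exists>M\<in>Bset N r. quadvec N r v M = (real N)\<^sup>2 \<and>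
        (\<forall>i\<in>{1..N}. \<forall>j\<in>{1..N}. \<forall>k\<in>{1..N}. \<forall>l\<in>{1..N}. Y (i, j) (k, l) = blockform r v M i j k l))"
    if "pseudomoment4 N Y" "extends4 N Y (gram r v)" for Y
  proof -
    interpret pseudomoment_extension N r v Y
      using that by unfold_locales
    show ?thesis
      using norm_sum exists_certificate by blast
  qed
  have part_b: "pseudomoment4 N (\<lambda>(i, j) (k, l). blockform r v M i j k l) \<and>
      extends4 N (\<lambda>(i, j) (k, l). blockform r v M i j k l) (gram r v)"
    if "(\<Sum>i\<in>{1..N}. \<Sum>a\<in>{1..r}. (v i a)\<^sup>2) = real N" "M \<in> Bset N r" "quadvec N r v M = (real N)\<^sup>2"
    for M
  proof -
    interpret tight_certificate N r v M
      using that by unfold_locales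
    show ?thesis
      using pseudomoment extends_gram by blast
  qed
  have "\<forall>i\<in>{1..N}. \<forall>j\<in>{1..N}. gram r v i j = gram r v j i"
    by (simp add: gram_def mult.commute)
  with part_a part_b show ?thesis
    unfolding E4_def by blast
qed

end
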